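(* Let $a,b$ be distinct positive real numbers and write $A=A(a,b)$, $G=G(a,b)$, $L=L(a,b)$, $I=I(a,b)$. Then $$L(A^2,G^2)=\frac{A+G}{2}\,L(A,G)>\frac{A+G}{2}\,L>L^2,$$ $$L(I,G)<L,$$ $$L<L(I,L)<L\cdot\frac{I-L}{L-G}.$$
   Context: For positive reals $x\neq y$: $A(x,y)=\frac{x+y}{2}$, $G(x,y)=\sqrt{xy}$, logarithmic mean $L(x,y)=\frac{x-y}{\log x-\log y}$, identric mean $I(x,y)=\frac{1}{e}\left(\frac{x^x}{y^y}\right)^{1/(x-y)}$. *)

theory Defs
  imports Complex_Main
begin

definition AM :: "real \<Rightarrow> real \<Rightarrow> real" where
  "AM x y = (x + y) / 2"

definition GM :: "real \<Rightarrow> real \<Rightarrow> real" where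
  "GM x y = sqrt (x * y)"

definition LM :: "real \<Rightarrow> real \<Rightarrow> real" where
  "LM x y = (x - y) / (ln x - ln y)"

definition IM :: "real \<Rightarrow> real \<Rightarrow> real" where
  "IM x y = (1 / exp 1) * ((x powr x) / (y powr y)) powr (1 / (x - y))"

end

theory Submission
  imports Defs "HOL-Real_Asymp.Real_Asymp"
begin

text \<open>
  Write \<open>a = c e\<^sup>t\<close>, \<open>b = c e\<^sup>-\<^sup>t\<close> with \<open>c, t > 0\<close>. Then \<open>A = c cosh t\<close>, \<open>G = c\<close>,
  \<open>L = c sinh t / t\<close> and \<open>I = c exp (t coth t - 1)\<close>, and since the logarithmic mean is
  homogeneous, every claimed inequality becomes an inequality between elementary functions
  of \<open>t > 0\<close>. Each of these is proved by monotonicity: the difference of the two sides tends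
  to \<open>0\<close> as \<open>t \<rightarrow> 0\<^sup>+\<close> and has positive derivative, the positivity of the derivative
  being again such an inequality. The key one is \<open>t\<^sup>2 (1 + cosh t) < sinh\<^sup>2 t + t sinh t\<close>,
  which controls the derivatives behind \<open>L(I,G) < L\<close> and \<open>log (I/L) > 1 - G/L\<close>.
\<close>

section \<open>Elementary properties of the means\<close>

lemma LM_commute: "LM x y = LM y x"
  unfolding LM_def by (metis minus_diff_eq minus_divide_divide)

lemma LM_mult: "c > 0 \<Longrightarrow> x > 0 \<Longrightarrow> y > 0 \<Longrightarrow> LM (c * x) (c * y) = c * LM x y"
  unfolding LM_def by (simp add: ln_mult right_diff_distrib[symmetric])

lemma LM_power2:
  assumes "x > 0" "y > 0" "x \<noteq> y"
  shows "LM (x\<^sup>2) (y\<^sup>2) = (x + y) / 2 * LM x y"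
proof -
  have "ln x - ln y \<noteq> 0" using assms by simp
  moreover have "ln (x\<^sup>2) = 2 * ln x" "ln (y\<^sup>2) = 2 * ln y" using assms by (simp_all add: ln_realpow)
  ultimately show ?thesis unfolding LM_def by (simp add: field_simps power2_eq_square)
qed

lemma less_LM:
  assumes "0 < y" "y < x"
  shows "y < LM x y"
proof -
  have "ln (x / y) < x / y - 1"
    using assms ln_le_minus_one[of "x / y"] ln_eq_minus_one[of "x / y"] by force
  then have "y * (ln x - ln y) < x - y"
    using assms by (simp add: ln_divide_pos field_simps)
  moreover have "ln x - ln y > 0" using assms by simp
  ultimately show ?thesis unfolding LM_def by (simp add: field_simps)
qed

lemma LM_less_of_ln_diff_gt:
  assumes "0 < y" "y < x" "0 < d" "d < ln x - ln y"
  shows "LM x y < (x - y) / d"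
  unfolding LM_def using assms by (intro divide_strict_left_mono) auto

lemma IM_eq_exp:
  assumes "x > 0" "y > 0"
  shows "IM x y = exp ((x * ln x - y * ln y) / (x - y) - 1)"
proof -
  have "x powr x / y powr y = exp (x * ln x - y * ln y)"
    using assms by (simp add: powr_def exp_diff)
  moreover have "exp (x * ln x - y * ln y) powr (1 / (x - y)) = exp ((x * ln x - y * ln y) / (x - y))"
    by (simp add: powr_def)
  ultimately show ?thesis unfolding IM_def by (simp add: exp_diff)
qed

lemma IM_commute: "x > 0 \<Longrightarrow> y > 0 \<Longrightarrow> IM x y = IM y x"
  by (simp add: IM_eq_exp) (metis minus_diff_eq minus_divide_divide)

lemma exp_pair_exists:
  fixes a b :: real
  assumes "a > 0" "b > 0" "a \<noteq> b"
  obtains c t where "c > 0" "t > 0" "{a, b} = {c * exp t, c * exp (- t)}"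
proof -
  define c where "c = exp ((ln a + ln b) / 2)"
  define s where "s = (ln a - ln b) / 2"
  have "a = c * exp s" "b = c * exp (- s)"
    unfolding c_def s_def using assms by (simp_all flip: exp_add add: field_simps)
  moreover have "s \<noteq> 0" unfolding s_def using assms by simp
  ultimately have "{a, b} = {c * exp \<bar>s\<bar>, c * exp (- \<bar>s\<bar>)}"
    by (cases "s > 0") (auto simp: insert_commute)
  moreover have "c > 0" "\<bar>s\<bar> > 0" unfolding c_def using \<open>s \<noteq> 0\<close> by simp_all
  ultimately show ?thesis using that by blast
qed

lemma means_of_exp_pair:
  fixes a b c t :: real
  assumes c: "c > 0" and t: "t > 0" and ab: "{a, b} = {c * exp t, c * exp (- t)}"
  shows "AM a b = c * cosh t" and "GM a b = c" and "LM a b = c * (sinh t / t)"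
    and "IM a b = c * exp (t * cosh t / sinh t - 1)"
proof -
  define p q where "p = c * exp t" and "q = c * exp (- t)"
  have ln_p: "ln p = ln c + t" and ln_q: "ln q = ln c - t"
    unfolding p_def q_def using c by (simp_all add: ln_mult)
  have diff: "p - q = 2 * c * sinh t" and sum: "p + q = 2 * c * cosh t"
    unfolding p_def q_def sinh_field_def cosh_field_def by (simp_all add: algebra_simps)
  have "p > 0" "q > 0" unfolding p_def q_def using c by simp_all
  have AM: "AM p q = c * cosh t" unfolding AM_def sum by simp
  have "p * q = c * c" unfolding p_def q_def by (simp add: exp_minus field_simps)
  then have GM: "GM p q = c" unfolding GM_def using c by simp
  have LM: "LM p q = c * (sinh t / t)"
    unfolding LM_def ln_p ln_q diff using t by (simp add: field_simps)
  have "p * ln p - q * ln q = (p - q) * ln c + t * (p + q)"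
    unfolding ln_p ln_q by (simp add: algebra_simps)
  also have "\<dots> = (p - q) * (ln c + t * cosh t / sinh t)"
    unfolding diff sum using t by (simp add: field_simps)
  finally have "(p * ln p - q * ln q) / (p - q) - 1 = ln c + (t * cosh t / sinh t - 1)"
    using diff c t by simp
  then have IM: "IM p q = c * exp (t * cosh t / sinh t - 1)"
    using c \<open>p > 0\<close> \<open>q > 0\<close> by (simp add: IM_eq_exp exp_add exp_diff)
  from ab have "a = p \<and> b = q \<or> a = q \<and> b = p"
    unfolding p_def q_def by (auto simp: doubleton_eq_iff)
  moreover have "AM q p = AM p q" "GM q p = GM p q" "LM q p = LM p q" "IM q p = IM p q"
    using IM_commute[OF \<open>p > 0\<close> \<open>q > 0\<close>] LM_commute[of p q]
    by (simp_all add: AM_def GM_def add.commute mult.commute)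
  ultimately show "AM a b = c * cosh t" and "GM a b = c" and "LM a b = c * (sinh t / t)"
    and "IM a b = c * exp (t * cosh t / sinh t - 1)"
    using AM GM LM IM by auto
qed

section \<open>Inequalities between hyperbolic functions\<close>

lemma DERIV_pos_imp_pos:
  fixes f f' :: "real \<Rightarrow> real"
  assumes "(f \<longlongrightarrow> 0) (at_right 0)"
    and "\<And>x. x > 0 \<Longrightarrow> (f has_real_derivative f' x) (at x)"
    and "\<And>x. x > 0 \<Longrightarrow> f' x > 0"
    and "t > 0"
  shows "f t > 0"
proof -
  have mono: "f s < f u" if "0 < s" "s < u" for s u
  proof (rule DERIV_pos_imp_increasing[OF that(2)])
    fix x
    assume "s \<le> x"
    then show "\<exists>y. (f has_real_derivative y) (at x) \<and> 0 < y"
      using that(1) assms(2,3) by (meson less_le_trans)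
  qed
  have "eventually (\<lambda>x. f x \<le> f (t / 2)) (at_right 0)"
    unfolding eventually_at_right_field
    using assms(4) mono by (intro exI[of _ "t / 2"]) (auto intro: less_imp_le)
  then have "0 \<le> f (t / 2)"
    by (rule tendsto_upperbound[OF assms(1)]) simp
  also have "f (t / 2) < f t" using mono assms(4) by simp
  finally show ?thesis .
qed

lemma cosh_plus_1_pos: "0 < cosh (x::real) + 1"
  using cosh_real_pos[of x] by linarith

lemma cosh_gt_1: "x \<noteq> 0 \<Longrightarrow> 1 < cosh (x::real)"
  using cosh_real_ge_1[of x] cosh_real_one_iff[of x] by linarith

lemma sinh_mult_sinh: "sinh x * sinh x = cosh x * cosh x - (1::real)"
  using sinh_square_eq[of x] by (simp add: power2_eq_square)

lemma sinh_gt_self: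
  assumes "t > 0"
  shows "t < sinh (t::real)"
proof -
  have "0 < sinh t - t"
    by (rule DERIV_pos_imp_pos[where f = "\<lambda>x. sinh x - x" and f' = "\<lambda>x. cosh x - 1"])
      (auto intro!: derivative_eq_intros tendsto_eq_intros simp: assms cosh_gt_1)
  then show ?thesis by simp
qed

lemma sinh_lt_mult_cosh:
  assumes "t > 0"
  shows "sinh t < t * cosh (t::real)"
proof -
  have "0 < t * cosh t - sinh t"
    by (rule DERIV_pos_imp_pos[where f = "\<lambda>x. x * cosh x - sinh x" and f' = "\<lambda>x. x * sinh x"])
      (auto intro!: derivative_eq_intros tendsto_eq_intros simp: assms)
  then show ?thesis by simp
qed

lemma two_sinh_lt_mult_cosh_plus_1:
  assumes "t > 0"
  shows "2 * sinh t < t * (cosh (t::real) + 1)"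
proof -
  have cosh_lt: "cosh x < 1 + x * sinh x" if "x > 0" for x :: real
  proof -
    have "0 < x * sinh x - cosh x + 1"
      by (rule DERIV_pos_imp_pos[where f = "\<lambda>x. x * sinh x - cosh x + 1" and f' = "\<lambda>x. x * cosh x"])
        (auto intro!: derivative_eq_intros tendsto_eq_intros simp: that)
    then show ?thesis by simp
  qed
  have "0 < t * (cosh t + 1) - 2 * sinh t"
    by (rule DERIV_pos_imp_pos[where f = "\<lambda>x. x * (cosh x + 1) - 2 * sinh x"
          and f' = "\<lambda>x. x * sinh x - cosh x + 1"])
      (auto intro!: derivative_eq_intros tendsto_eq_intros simp: assms cosh_lt algebra_simps)
  then show ?thesis by simp
qed

lemma ln_cosh_lt:
  assumes "t > 0"
  shows "ln (cosh t) < t * sinh t / (cosh (t::real) + 1)"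
proof -
  have quotient: "(S + x) * (C + 1) / ((C + 1) * (C + 1)) - S / C = (x * C - S) / (C * (C + 1))"
    if "C > 0" for S C x :: real
  proof -
    have "C + 1 > 0" using that by simp
    then have cancel: "(S + x) * (C + 1) / ((C + 1) * (C + 1)) = (S + x) / (C + 1)" by simp
    show ?thesis unfolding cancel using that \<open>C + 1 > 0\<close> by (simp add: field_simps)
  qed
  have "0 < t * sinh t / (cosh t + 1) - ln (cosh t)"
  proof (rule DERIV_pos_imp_pos[where f = "\<lambda>x. x * sinh x / (cosh x + 1) - ln (cosh x)"
        and f' = "\<lambda>x. (x * cosh x - sinh x) / (cosh x * (cosh x + 1))"])
    fix x :: real
    assume x: "x > 0"
    have numerator: "(sinh x + cosh x * x) * (cosh x + 1) - x * sinh x * sinh x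
        = (sinh x + x) * (cosh x + 1)"
      using sinh_mult_sinh[of x] by algebra
    show "((\<lambda>x. x * sinh x / (cosh x + 1) - ln (cosh x)) has_real_derivative
        (x * cosh x - sinh x) / (cosh x * (cosh x + 1))) (at x)"
      using cosh_plus_1_pos[of x]
      by (auto intro!: derivative_eq_intros) (subst numerator, rule quotient, simp)
    show "(x * cosh x - sinh x) / (cosh x * (cosh x + 1)) > 0"
      using sinh_lt_mult_cosh[OF x] cosh_plus_1_pos[of x] by simp
  qed (auto intro!: tendsto_eq_intros simp: assms cosh_plus_1_pos)
  then show ?thesis by simp
qed

lemma mult_1_plus_2cosh_lt:
  assumes "t > 0"
  shows "t * (1 + 2 * cosh t) < sinh t * (cosh (t::real) + 2)"
proof -
  have "0 < sinh t * cosh t + 2 * sinh t - t - 2 * t * cosh t"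
  proof (rule DERIV_pos_imp_pos[where f = "\<lambda>x. sinh x * cosh x + 2 * sinh x - x - 2 * x * cosh x"
        and f' = "\<lambda>x. 2 * sinh x * (sinh x - x)"])
    fix x :: real
    assume x: "x > 0"
    show "((\<lambda>x. sinh x * cosh x + 2 * sinh x - x - 2 * x * cosh x) has_real_derivative
        2 * sinh x * (sinh x - x)) (at x)"
      by (auto intro!: derivative_eq_intros) (use sinh_mult_sinh[of x] in algebra)
    show "2 * sinh x * (sinh x - x) > 0" using sinh_gt_self[OF x] x by simp
  qed (auto intro!: tendsto_eq_intros simp: assms)
  then show ?thesis by (simp add: algebra_simps)
qed

lemma sq_mult_1_plus_cosh_lt:
  assumes "t > 0"
  shows "t * t * (1 + cosh t) < sinh t * sinh t + t * sinh (t::real)"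
proof -
  have quotient: "S + (S + x) * (C + 1) / ((C + 1) * (C + 1)) - 2 * x
      = (S * C + 2 * S - x - 2 * x * C) / (C + 1)" if "C > 0" for S C x :: real
  proof -
    have "C + 1 > 0" using that by simp
    then have cancel: "(S + x) * (C + 1) / ((C + 1) * (C + 1)) = (S + x) / (C + 1)" by simp
    show ?thesis unfolding cancel using that \<open>C + 1 > 0\<close> by (simp add: field_simps)
  qed
  have reduced_pos: "0 < cosh t - 1 + t * sinh t / (cosh t + 1) - t * t"
  proof (rule DERIV_pos_imp_pos[where f = "\<lambda>x. cosh x - 1 + x * sinh x / (cosh x + 1) - x * x"
        and f' = "\<lambda>x. (sinh x * cosh x + 2 * sinh x - x - 2 * x * cosh x) / (cosh x + 1)"])
    fix x :: real
    assume x: "x > 0"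
    have numerator: "(sinh x + cosh x * x) * (cosh x + 1) - x * sinh x * sinh x
        = (sinh x + x) * (cosh x + 1)"
      using sinh_mult_sinh[of x] by algebra
    show "((\<lambda>x. cosh x - 1 + x * sinh x / (cosh x + 1) - x * x) has_real_derivative
        (sinh x * cosh x + 2 * sinh x - x - 2 * x * cosh x) / (cosh x + 1)) (at x)"
      using cosh_plus_1_pos[of x]
      by (auto intro!: derivative_eq_intros) (subst numerator, rule quotient, simp)
    show "(sinh x * cosh x + 2 * sinh x - x - 2 * x * cosh x) / (cosh x + 1) > 0"
      using mult_1_plus_2cosh_lt[OF x] cosh_plus_1_pos[of x] by (simp add: algebra_simps)
  qed (auto intro!: tendsto_eq_intros simp: assms cosh_plus_1_pos)
  have reduced: "sinh t * sinh t + t * sinh t - t * t * (1 + cosh t)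
      = (cosh t + 1) * (cosh t - 1 + t * sinh t / (cosh t + 1) - t * t)"
  proof -
    have "(cosh t + 1) * (t * sinh t / (cosh t + 1)) = t * sinh t"
      using cosh_plus_1_pos[of t] by simp
    then show ?thesis using sinh_mult_sinh[of t] by algebra
  qed
  have "0 < (cosh t + 1) * (cosh t - 1 + t * sinh t / (cosh t + 1) - t * t)"
    using cosh_plus_1_pos[of t] reduced_pos by (rule mult_pos_pos)
  then show ?thesis unfolding reduced[symmetric] by simp
qed

lemma exp_mult_coth_minus_1_lt:
  assumes "t > 0"
  shows "exp (t * cosh t / sinh t - 1) < 1 + cosh t - sinh t / (t::real)"
proof -
  have pos: "0 < 1 + cosh x - sinh x / x" if "x > 0" for x :: real
  proof -
    have "sinh x / x < (cosh x + 1) / 2"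
      using two_sinh_lt_mult_cosh_plus_1[OF that] that by (simp add: field_simps)
    then show ?thesis using cosh_plus_1_pos[of x] by argo
  qed
  \<comment> \<open>\<open>S\<close>, \<open>C\<close> stand for \<open>sinh x\<close>, \<open>cosh x\<close> and \<open>n\<close> for the argument of the logarithm\<close>
  have quotient: "(S - (C * x - S) / (x * x)) / n - ((C + S * x) * S - x * C * C) / (S * S)
      = (S - x) * (S * S + x * S - x * x * (1 + C)) / (x * x * n * (S * S))"
    if "x > 0" "S > 0" "S * S = C * C - 1" "n > 0" "n * x = x + C * x - S" for x S C n :: real
  proof -
    have numerator: "(C + S * x) * S - x * C * C = C * S - x" using that(3) by algebra
    show ?thesis unfolding numerator using that(1,2,4)
      by (simp add: field_simps) (use that(3,5) in algebra)
  qed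
  have "0 < ln (1 + cosh t - sinh t / t) - t * cosh t / sinh t + 1"
  proof (rule DERIV_pos_imp_pos[where f = "\<lambda>x. ln (1 + cosh x - sinh x / x) - x * cosh x / sinh x + 1"
        and f' = "\<lambda>x. (sinh x - x) * (sinh x * sinh x + x * sinh x - x * x * (1 + cosh x))
                   / (x * x * (1 + cosh x - sinh x / x) * (sinh x * sinh x))"])
    show "((\<lambda>x::real. ln (1 + cosh x - sinh x / x) - x * cosh x / sinh x + 1) \<longlongrightarrow> 0) (at_right 0)"
      unfolding sinh_field_def cosh_field_def by real_asymp
    fix x :: real
    assume x: "x > 0"
    show "((\<lambda>x::real. ln (1 + cosh x - sinh x / x) - x * cosh x / sinh x + 1) has_real_derivative
        (sinh x - x) * (sinh x * sinh x + x * sinh x - x * x * (1 + cosh x))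
          / (x * x * (1 + cosh x - sinh x / x) * (sinh x * sinh x))) (at x)"
      using x pos[OF x]
      by (auto intro!: derivative_eq_intros)
        (rule quotient; use x pos[OF x] sinh_mult_sinh[of x] in \<open>auto simp: field_simps\<close>)
    show "0 < (sinh x - x) * (sinh x * sinh x + x * sinh x - x * x * (1 + cosh x))
        / (x * x * (1 + cosh x - sinh x / x) * (sinh x * sinh x))"
      using sinh_gt_self[OF x] sq_mult_1_plus_cosh_lt[OF x] pos[OF x] x
      by (intro divide_pos_pos mult_pos_pos) auto
  qed (use assms in auto)
  then have "t * cosh t / sinh t - 1 < ln (1 + cosh t - sinh t / t)" by simp
  then show ?thesis using pos[OF assms] by (metis exp_less_cancel_iff exp_ln)
qed

lemma one_minus_div_sinh_lt:
  assumes "t > 0"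
  shows "1 - t / sinh t < t * cosh t / sinh t - 1 - ln (sinh t / (t::real))"
proof -
  have quotient: "((C + S * x) * S - x * C * C) / (S * S) - (C * x - S) / (S * x) + (S - x * C) / (S * S)
      = (S * S + x * S - x * x * (1 + C)) / (x * (S * S))"
    if "x > 0" "S > 0" "S * S = C * C - 1" for x S C :: real
  proof -
    have numerator: "(C + S * x) * S - x * C * C = C * S - x" using that(3) by algebra
    show ?thesis unfolding numerator using that(1,2) by (simp add: field_simps)
  qed
  have "0 < t * cosh t / sinh t - 2 - ln (sinh t / t) + t / sinh t"
  proof (rule DERIV_pos_imp_pos[where f = "\<lambda>x. x * cosh x / sinh x - 2 - ln (sinh x / x) + x / sinh x"
        and f' = "\<lambda>x. (sinh x * sinh x + x * sinh x - x * x * (1 + cosh x)) / (x * (sinh x * sinh x))"])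
    show "((\<lambda>x::real. x * cosh x / sinh x - 2 - ln (sinh x / x) + x / sinh x) \<longlongrightarrow> 0) (at_right 0)"
      unfolding sinh_field_def cosh_field_def by real_asymp
    fix x :: real
    assume x: "x > 0"
    show "((\<lambda>x::real. x * cosh x / sinh x - 2 - ln (sinh x / x) + x / sinh x) has_real_derivative
        (sinh x * sinh x + x * sinh x - x * x * (1 + cosh x)) / (x * (sinh x * sinh x))) (at x)"
      using x by (auto intro!: derivative_eq_intros)
        (rule quotient; use x sinh_mult_sinh[of x] in auto)
    show "0 < (sinh x * sinh x + x * sinh x - x * x * (1 + cosh x)) / (x * (sinh x * sinh x))"
      using sq_mult_1_plus_cosh_lt[OF x] x by (intro divide_pos_pos mult_pos_pos) auto
  qed (use assms in auto)
  then show ?thesis by simp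
qed

lemma sinh_div_cosh_plus_1:
  assumes "t \<noteq> 0"
  shows "sinh t / (cosh t + 1) = (cosh t - 1) / sinh (t::real)"
proof -
  have "cosh t + 1 \<noteq> 0" "sinh t \<noteq> 0" using cosh_plus_1_pos[of t] assms by auto
  then show ?thesis by (simp add: frac_eq_eq sinh_mult_sinh algebra_simps)
qed

section \<open>Inequalities between the means\<close>

lemma GM_pos: "a > 0 \<Longrightarrow> b > 0 \<Longrightarrow> 0 < GM a b"
  by (simp add: GM_def)

context
  fixes a b :: real
  assumes pos: "a > 0" "b > 0" and distinct: "a \<noteq> b"
begin

lemma GM_lt_AM: "GM a b < AM a b"
proof -
  obtain c t where c: "c > 0" and t: "t > 0" and ab: "{a, b} = {c * exp t, c * exp (- t)}"
    using exp_pair_exists[OF pos distinct] .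
  show ?thesis using c t cosh_gt_1[of t] by (simp add: means_of_exp_pair[OF c t ab])
qed

lemma GM_lt_LM: "GM a b < LM a b"
proof -
  obtain c t where c: "c > 0" and t: "t > 0" and ab: "{a, b} = {c * exp t, c * exp (- t)}"
    using exp_pair_exists[OF pos distinct] .
  have "1 < sinh t / t" using sinh_gt_self[OF t] t by simp
  then have "c * 1 < c * (sinh t / t)" using c by (rule mult_strict_left_mono)
  then show ?thesis by (simp add: means_of_exp_pair[OF c t ab])
qed

lemma LM_lt_LM_AM_GM: "LM a b < LM (AM a b) (GM a b)"
proof -
  obtain c t where c: "c > 0" and t: "t > 0" and ab: "{a, b} = {c * exp t, c * exp (- t)}"
    using exp_pair_exists[OF pos distinct] .
  have "t \<noteq> 0" using t by simp
  have "ln (cosh t) < t * (sinh t / (cosh t + 1))"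
    using ln_cosh_lt[OF t] by simp
  also have "\<dots> = t * ((cosh t - 1) / sinh t)"
    by (simp only: sinh_div_cosh_plus_1[OF \<open>t \<noteq> 0\<close>])
  finally have "ln (cosh t) < t * ((cosh t - 1) / sinh t)" .
  moreover have "0 < ln (cosh t)" using cosh_gt_1[of t] t by simp
  ultimately have "sinh t / t < (cosh t - 1) / ln (cosh t)"
    using t by (simp add: field_simps)
  then have "c * (sinh t / t) < c * ((cosh t - 1) / ln (cosh t))"
    using c by (rule mult_strict_left_mono)
  also have "\<dots> = LM (c * cosh t) (c * 1)"
    using LM_mult[of c "cosh t" 1] c unfolding LM_def by simp
  finally show ?thesis by (simp add: means_of_exp_pair[OF c t ab])
qed

lemma LM_lt_mean_AM_GM: "LM a b < (AM a b + GM a b) / 2"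
proof -
  obtain c t where c: "c > 0" and t: "t > 0" and ab: "{a, b} = {c * exp t, c * exp (- t)}"
    using exp_pair_exists[OF pos distinct] .
  have "sinh t / t < (cosh t + 1) / 2"
    using two_sinh_lt_mult_cosh_plus_1[OF t] t by (simp add: field_simps)
  then have "c * (sinh t / t) < c * ((cosh t + 1) / 2)" using c by (rule mult_strict_left_mono)
  then show ?thesis by (simp add: means_of_exp_pair[OF c t ab] algebra_simps)
qed

lemma LM_IM_GM_lt_LM: "LM (IM a b) (GM a b) < LM a b"
proof -
  obtain c t where c: "c > 0" and t: "t > 0" and ab: "{a, b} = {c * exp t, c * exp (- t)}"
    using exp_pair_exists[OF pos distinct] .
  define u where "u = t * cosh t / sinh t - 1"
  have "u > 0" unfolding u_def using sinh_lt_mult_cosh[OF t] t by (simp add: field_simps)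
  have "exp u < 1 + cosh t - sinh t / t"
    unfolding u_def by (rule exp_mult_coth_minus_1_lt[OF t])
  also have "\<dots> = 1 + u * (sinh t / t)"
    unfolding u_def using t by (simp add: field_simps)
  finally have "(exp u - 1) / u < sinh t / t" using \<open>u > 0\<close> by (simp add: field_simps)
  then have "c * ((exp u - 1) / u) < c * (sinh t / t)" using c by (rule mult_strict_left_mono)
  moreover have "LM (c * exp u) (c * 1) = c * ((exp u - 1) / u)"
    using LM_mult[of c "exp u" 1] c unfolding LM_def by simp
  ultimately show ?thesis by (simp add: means_of_exp_pair[OF c t ab] flip: u_def)
qed

lemma relative_gap_lt_ln_IM_div_LM: "(LM a b - GM a b) / LM a b < ln (IM a b) - ln (LM a b)"
proof -
  obtain c t where c: "c > 0" and t: "t > 0" and ab: "{a, b} = {c * exp t, c * exp (- t)}"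
    using exp_pair_exists[OF pos distinct] .
  have "(LM a b - GM a b) / LM a b = 1 - t / sinh t"
    using c t by (simp add: means_of_exp_pair[OF c t ab] field_simps)
  moreover have "ln (IM a b) - ln (LM a b) = t * cosh t / sinh t - 1 - ln (sinh t / t)"
    using c t by (simp add: means_of_exp_pair[OF c t ab] ln_mult ln_div)
  ultimately show ?thesis using one_minus_div_sinh_lt[OF t] by simp
qed

lemma LM_pos: "0 < LM a b"
  using GM_pos[OF pos] GM_lt_LM by linarith

lemma LM_lt_IM: "LM a b < IM a b"
proof -
  have "0 < (LM a b - GM a b) / LM a b" using GM_lt_LM LM_pos by simp
  then have "ln (LM a b) < ln (IM a b)" using relative_gap_lt_ln_IM_div_LM by linarith
  moreover have "0 < IM a b" using pos by (simp add: IM_eq_exp)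
  ultimately show ?thesis using LM_pos by simp
qed

lemma LM_IM_LM_lt: "LM (IM a b) (LM a b) < LM a b * (IM a b - LM a b) / (LM a b - GM a b)"
proof -
  have "LM (IM a b) (LM a b) < (IM a b - LM a b) / ((LM a b - GM a b) / LM a b)"
    using GM_lt_LM LM_pos LM_lt_IM relative_gap_lt_ln_IM_div_LM
    by (intro LM_less_of_ln_diff_gt) auto
  then show ?thesis using LM_pos by (simp add: field_simps)
qed

end

theorem theorem3:
  fixes a b :: real
  assumes "a > 0" and "b > 0" and "a \<noteq> b"
  shows "LM ((AM a b)^2) ((GM a b)^2) = (AM a b + GM a b) / 2 * LM (AM a b) (GM a b)
       \<and> (AM a b + GM a b) / 2 * LM (AM a b) (GM a b) > (AM a b + GM a b) / 2 * LM a b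
       \<and> (AM a b + GM a b) / 2 * LM a b > (LM a b)^2
       \<and> LM (IM a b) (GM a b) < LM a b
       \<and> LM a b < LM (IM a b) (LM a b)
       \<and> LM (IM a b) (LM a b) < LM a b * (IM a b - LM a b) / (LM a b - GM a b)"
proof -
  note means = GM_lt_AM[OF assms] LM_pos[OF assms] LM_lt_mean_AM_GM[OF assms]
  have "0 < GM a b" using GM_pos assms by simp
  then have "LM ((AM a b)^2) ((GM a b)^2) = (AM a b + GM a b) / 2 * LM (AM a b) (GM a b)"
    using means by (intro LM_power2) auto
  moreover have "(AM a b + GM a b) / 2 * LM (AM a b) (GM a b) > (AM a b + GM a b) / 2 * LM a b"
    using LM_lt_LM_AM_GM[OF assms] means \<open>0 < GM a b\<close> by (intro mult_strict_left_mono) auto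
  moreover have "(AM a b + GM a b) / 2 * LM a b > (LM a b)^2"
    using means by (simp add: power2_eq_square mult_strict_right_mono)
  ultimately show ?thesis
    using LM_IM_GM_lt_LM[OF assms] less_LM[OF LM_pos[OF assms] LM_lt_IM[OF assms]]
      LM_IM_LM_lt[OF assms]
    by blast
qed

end
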